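(* Let $\theta_{01}\in\mathbb{R}$ and let $\sigma_U^2>0$, $\sigma_V^2>0$, $\sigma_{UV}\in\mathbb{R}$ satisfy $|\rho_{UV}|<1$, where $\rho_{UV}=\sigma_{UV}/(\sigma_U\sigma_V)$. Define the identified set $S$ as the set of all $\sigma_{U^*}^2\ge 0$ for which there exist $\sigma_{V^*}^2\ge 0$, $\sigma_\varepsilon^2\ge 0$ and $\sigma_{U^*V^*}\in\mathbb{R}$ with $\sigma_{U^*V^*}^2\le \sigma_{U^*}^2\sigma_{V^*}^2$ such that $$\sigma_U^2=\sigma_{U^*}^2+\theta_{01}^2\sigma_\varepsilon^2,\qquad \sigma_V^2=\sigma_{V^*}^2+\sigma_\varepsilon^2,\qquad \sigma_{UV}=\sigma_{U^*V^*}-\theta_{01}\sigma_\varepsilon^2 .$$ Then $S=[\underline{\sigma}_{U^*}^2,\sigma_U^2]$, where $$\underline{\sigma}_{U^*}^2=\max\left\{\frac{(\theta_{01}\sigma_{UV}+\sigma_U^2)^2}{\sigma_V^2\theta_{01}^2+2\sigma_{UV}\theta_{01}+\sigma_U^2},\ \sigma_U^2-\theta_{01}^2\sigma_V^2\right\}.$$ *)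

theory Defs
  imports Complex_Main
begin

definition identified_set :: "real \<Rightarrow> real \<Rightarrow> real \<Rightarrow> real \<Rightarrow> real set" where
  "identified_set \<theta> sU2 sV2 sUV =
     {sUs2. sUs2 \<ge> 0 \<and> (\<exists>sVs2 se2 sUVs. sVs2 \<ge> 0 \<and> se2 \<ge> 0 \<and> sUVs\<^sup>2 \<le> sUs2 * sVs2 \<and>
        sU2 = sUs2 + \<theta>\<^sup>2 * se2 \<and> sV2 = sVs2 + se2 \<and> sUV = sUVs - \<theta> * se2)}"

definition lower_bound :: "real \<Rightarrow> real \<Rightarrow> real \<Rightarrow> real \<Rightarrow> real" where
  "lower_bound \<theta> sU2 sV2 sUV =
     max ((\<theta> * sUV + sU2)\<^sup>2 / (sV2 * \<theta>\<^sup>2 + 2 * sUV * \<theta> + sU2)) (sU2 - \<theta>\<^sup>2 * sV2)"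

end

theory Submission
  imports Defs
begin

text \<open>Write \<open>a, b, c, \<theta>\<close> for \<open>\<sigma>\<^sub>U\<^sup>2, \<sigma>\<^sub>V\<^sup>2, \<sigma>\<^sub>U\<^sub>V, \<theta>\<^sub>0\<^sub>1\<close>. For \<open>\<theta> \<noteq> 0\<close> the
  error variance is forced to be \<open>e = (a - x) / \<theta>\<^sup>2\<close>, so \<open>x\<close> is identified iff
  \<open>x \<le> a\<close>, \<open>e \<le> b\<close> (the linear lower bound \<open>a - \<theta>\<^sup>2 b\<close>) and the Cauchy-Schwarz
  constraint \<open>(c + \<theta> e)\<^sup>2 \<le> x (b - e)\<close> hold. Multiplied by \<open>\<theta>\<^sup>2\<close>, the latter is a
  quadratic inequality in \<open>x\<close> equivalent to \<open>(\<theta> c + a)\<^sup>2 \<le> x (b \<theta>\<^sup>2 + 2 c \<theta> + a)\<close>,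
  and \<open>|\<rho>\<^sub>U\<^sub>V| < 1\<close> makes that denominator positive, giving the first term of the bound.\<close>

lemma sq_less_mult_of_abs_correlation_less_one:
  fixes a b c :: real
  assumes "a > 0" "b > 0" "\<bar>c / (sqrt a * sqrt b)\<bar> < 1"
  shows "c\<^sup>2 < a * b"
proof -
  have "\<bar>c\<bar> < sqrt a * sqrt b"
    using assms by (simp add: abs_divide pos_divide_less_eq)
  hence "c\<^sup>2 < (sqrt a * sqrt b)\<^sup>2"
    by (metis abs_ge_zero power2_abs power_strict_mono zero_less_numeral)
  thus ?thesis
    using assms(1,2) by (simp add: power_mult_distrib)
qed

lemma quadratic_denominator_pos:
  fixes a b c t :: real
  assumes "a > 0" "c\<^sup>2 < a * b"
  shows "b * t\<^sup>2 + 2 * c * t + a > 0"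
proof -
  have "a * (b * t\<^sup>2 + 2 * c * t + a) = (a + c * t)\<^sup>2 + (a * b - c\<^sup>2) * t\<^sup>2"
    by (simp add: algebra_simps power2_eq_square)
  moreover have "(a + c * t)\<^sup>2 + (a * b - c\<^sup>2) * t\<^sup>2 > 0"
  proof (cases "t = 0")
    case True
    thus ?thesis using assms(1) by simp
  next
    case False
    thus ?thesis using assms(2) by (simp add: add_nonneg_pos)
  qed
  ultimately have "a * (b * t\<^sup>2 + 2 * c * t + a) > 0"
    by simp
  thus ?thesis
    using assms(1) by (simp add: zero_less_mult_iff)
qed

lemma lower_bound_le_iff:
  fixes t a b c x :: real
  assumes "b * t\<^sup>2 + 2 * c * t + a > 0"
  shows "lower_bound t a b c \<le> x \<longleftrightarrow>
    (c * t + a - x)\<^sup>2 \<le> x * (b * t\<^sup>2 - a + x) \<and> a - t\<^sup>2 * b \<le> x"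
proof -
  have "(t * c + a)\<^sup>2 / (b * t\<^sup>2 + 2 * c * t + a) \<le> x \<longleftrightarrow>
      (t * c + a)\<^sup>2 \<le> x * (b * t\<^sup>2 + 2 * c * t + a)"
    using assms by (simp add: pos_divide_le_eq)
  also have "\<dots> \<longleftrightarrow> (c * t + a - x)\<^sup>2 \<le> x * (b * t\<^sup>2 - a + x)"
    by (simp add: algebra_simps power2_eq_square)
  finally show ?thesis
    unfolding lower_bound_def by simp
qed

lemma identified_set_necessary:
  fixes t a b c x :: real
  assumes "x \<in> identified_set t a b c"
  shows "x \<le> a" and "a - t\<^sup>2 * b \<le> x"
    and "(c * t + a - x)\<^sup>2 \<le> x * (b * t\<^sup>2 - a + x)"
proof -
  obtain v e w where "v \<ge> 0" "e \<ge> 0" and w: "w\<^sup>2 \<le> x * v"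
    and a: "a = x + t\<^sup>2 * e" and b: "b = v + e" and c: "c = w - t * e"
    using assms unfolding identified_set_def by auto
  show "x \<le> a" and "a - t\<^sup>2 * b \<le> x"
    using \<open>v \<ge> 0\<close> \<open>e \<ge> 0\<close> a b by (simp_all add: algebra_simps)
  have "(c * t + a - x)\<^sup>2 = t\<^sup>2 * w\<^sup>2"
    unfolding a c by (simp add: algebra_simps power2_eq_square)
  also have "\<dots> \<le> t\<^sup>2 * (x * v)"
    using w by (simp add: mult_left_mono)
  also have "\<dots> = x * (b * t\<^sup>2 - a + x)"
    unfolding a b by (simp add: algebra_simps)
  finally show "(c * t + a - x)\<^sup>2 \<le> x * (b * t\<^sup>2 - a + x)" .
qed

lemma identified_set_sufficient:
  fixes t a b c x :: real
  assumes "0 \<le> x" "x \<le> a" "a - t\<^sup>2 * b \<le> x"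
    and quadratic: "(c * t + a - x)\<^sup>2 \<le> x * (b * t\<^sup>2 - a + x)"
    and "c\<^sup>2 \<le> a * b" "b \<ge> 0"
  shows "x \<in> identified_set t a b c"
proof (cases "t = 0")
  case True
  hence "x = a" using assms(2,3) by simp
  thus ?thesis
    unfolding identified_set_def using True assms
    by (intro CollectI conjI exI[of _ b] exI[of _ 0] exI[of _ c]) auto
next
  case False
  hence t2: "t\<^sup>2 > 0" by simp
  define e where "e = (a - x) / t\<^sup>2"
  have te: "t\<^sup>2 * e = a - x" using t2 e_def by simp
  have "e \<ge> 0" using assms(2) t2 e_def by simp
  have "e \<le> b" using assms(3) t2 e_def by (simp add: divide_le_eq algebra_simps)
  have "t\<^sup>2 * (c + t * e)\<^sup>2 = (c * t + t\<^sup>2 * e)\<^sup>2"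
    by (simp add: algebra_simps power2_eq_square)
  also have "\<dots> = (c * t + a - x)\<^sup>2"
    by (simp add: te add_diff_eq)
  also have "\<dots> \<le> x * (b * t\<^sup>2 - a + x)" by (rule quadratic)
  also have "\<dots> = x * (b * t\<^sup>2 - t\<^sup>2 * e)" by (simp add: te)
  also have "\<dots> = t\<^sup>2 * (x * (b - e))" by (simp add: algebra_simps)
  finally have "(c + t * e)\<^sup>2 \<le> x * (b - e)" using t2 by simp
  thus ?thesis
    unfolding identified_set_def using assms(1) \<open>e \<ge> 0\<close> \<open>e \<le> b\<close> te
    by (intro CollectI conjI exI[of _ "b - e"] exI[of _ e] exI[of _ "c + t * e"]) auto
qed

theorem proposition1:
  fixes \<theta> sU2 sV2 sUV :: real
  assumes "sU2 > 0" and "sV2 > 0"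
    and "\<bar>sUV / (sqrt sU2 * sqrt sV2)\<bar> < 1"
  shows "identified_set \<theta> sU2 sV2 sUV = {lower_bound \<theta> sU2 sV2 sUV .. sU2}"
proof (intro set_eqI iffI)
  have "sUV\<^sup>2 < sU2 * sV2"
    using assms by (rule sq_less_mult_of_abs_correlation_less_one)
  hence D: "sV2 * \<theta>\<^sup>2 + 2 * sUV * \<theta> + sU2 > 0"
    by (rule quadratic_denominator_pos[OF assms(1)])
  fix x
  show "x \<in> {lower_bound \<theta> sU2 sV2 sUV .. sU2}" if "x \<in> identified_set \<theta> sU2 sV2 sUV"
    using identified_set_necessary[OF that] lower_bound_le_iff[OF D] by auto
  assume x: "x \<in> {lower_bound \<theta> sU2 sV2 sUV .. sU2}"
  have "0 \<le> x"
  proof -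
    have "0 \<le> (\<theta> * sUV + sU2)\<^sup>2 / (sV2 * \<theta>\<^sup>2 + 2 * sUV * \<theta> + sU2)"
      using D by simp
    thus ?thesis using x unfolding lower_bound_def by simp
  qed
  with x show "x \<in> identified_set \<theta> sU2 sV2 sUV"
    using lower_bound_le_iff[OF D] \<open>sUV\<^sup>2 < sU2 * sV2\<close> assms(2)
    by (intro identified_set_sufficient) auto
qed

end
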